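(* Let $d\geq 1$, let $p\in[0,1]$ with $p<p_d=\frac{2d+1}{4d}$, let $(S_n)$ be the $d$-dimensional elephant random walk with memory parameter $p$, and let $G_n=\frac{1}{n}\sum_{k=1}^n S_k$ be its center of mass. Then $$\lim_{n\to\infty}\frac{1}{n}G_n=0 \quad\text{almost surely.}$$
   Context: The $d$-dimensional elephant random walk (ERW) with memory parameter $p\in[0,1]$ is defined as follows. Let $e_1,\dots,e_d$ be the standard basis of $\mathbb{R}^d$; the $2d$ directions are $\pm e_1,\dots,\pm e_d$. Set $S_0=0$. The first step $X_1$ is uniformly distributed on the $2d$ directions. For $n\geq 1$, given $X_1,\dots,X_n$, an index $k$ is chosen uniformly at random in $\{1,\dots,n\}$, and then $X_{n+1}=X_k$ with probability $p$, while $X_{n+1}$ equals each of the $2d-1$ remaining directions with probability $(1-p)/(2d-1)$. The position is $S_{n+1}=S_n+X_{n+1}$. The regime $p<p_d$ is called the diffusive regime. *)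

theory Defs
  imports "HOL-Probability.Probability"
begin

definition erw_dirs :: "(real ^ 'd) set" where
  "erw_dirs = {v. \<exists>i. \<exists>s::real. (s = 1 \<or> s = -1) \<and> v = (\<chi> j. if j = i then s else 0)}"

text \<open>Law of the d-dimensional elephant random walk with memory parameter p:
  the steps X 1, X 2, ... (index 0 unused) are discrete random variables on M;
  X 1 is uniform on the 2d directions, and conditionally on X 1 = h 1, ..., X n = h n,
  X (n+1) = v with probability (1/n) * sum_{k=1..n} (p if h k = v else (1-p)/(2d-1))
  (choose k uniformly, repeat X k with probability p, otherwise pick one of the
  2d-1 other directions uniformly).\<close>
definition is_erw :: "'a measure \<Rightarrow> real \<Rightarrow> (nat \<Rightarrow> 'a \<Rightarrow> real ^ 'd) \<Rightarrow> bool" where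
  "is_erw M p X \<longleftrightarrow>
     prob_space M \<and>
     (\<forall>k. X k \<in> measurable M (count_space UNIV)) \<and>
     (\<forall>v\<in>erw_dirs. measure M {\<omega>\<in>space M. X 1 \<omega> = v} = 1 / (2 * real CARD('d))) \<and>
     (\<forall>n\<ge>1. \<forall>h::nat \<Rightarrow> real ^ 'd. \<forall>v\<in>erw_dirs.
        measure M {\<omega>\<in>space M. (\<forall>k\<in>{1..n}. X k \<omega> = h k) \<and> X (Suc n) \<omega> = v}
        = measure M {\<omega>\<in>space M. \<forall>k\<in>{1..n}. X k \<omega> = h k}
          * ((\<Sum>k=1..n. if h k = v then p else (1 - p) / (2 * real CARD('d) - 1)) / real n))"

definition erw_pos :: "(nat \<Rightarrow> 'a \<Rightarrow> real ^ 'd) \<Rightarrow> nat \<Rightarrow> 'a \<Rightarrow> real ^ 'd" where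
  "erw_pos X n \<omega> = (\<Sum>k=1..n. X k \<omega>)"

definition erw_center :: "(nat \<Rightarrow> 'a \<Rightarrow> real ^ 'd) \<Rightarrow> nat \<Rightarrow> 'a \<Rightarrow> real ^ 'd" where
  "erw_center X n \<omega> = (1 / real n) *\<^sub>R (\<Sum>k=1..n. erw_pos X k \<omega>)"

end

theory Submission
  imports Defs "HOL-Library.Discrete_Functions"
begin

(* Write a = p - (1 - p) / (2d - 1). Given the first n steps, the next step has conditional
   mean (a / n) S_n and norm one, hence E |S_(n+1)|^2 = (1 + 2a/n) E |S_n|^2 + 1.
   The condition p < p_d is exactly a < 1/2, and then this recursion gives E |S_n|^2 = O(n).
   Chebyshev's inequality and Borel-Cantelli along the squares n = m^2 yield S_(m^2) / m^2 -> 0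
   almost surely; as the steps have norm one this interpolates to S_n / n -> 0, and G_n / n,
   an average of the S_k / n over k <= n, then tends to 0 as well. *)

section \<open>Deterministic limit lemmas\<close>

lemma norm_diff_le_of_unit_increments:
  fixes s :: "nat \<Rightarrow> 'b::real_normed_vector"
  assumes "\<And>n. norm (s (Suc n) - s n) \<le> 1"
  shows "norm (s (m + t) - s m) \<le> real t"
proof (induction t)
  case (Suc t)
  have "norm (s (m + Suc t) - s m) \<le> norm (s (Suc (m + t)) - s (m + t)) + norm (s (m + t) - s m)"
    using norm_triangle_ineq[of "s (Suc (m + t)) - s (m + t)" "s (m + t) - s m"] by simp
  then show ?case using assms[of "m + t"] Suc.IH by simp
qed simp

lemma filterlim_floor_sqrt_at_top: "filterlim floor_sqrt at_top at_top"
  unfolding filterlim_at_top eventually_at_top_linorder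
proof
  fix z :: nat
  have "\<forall>n\<ge>z\<^sup>2. z \<le> floor_sqrt n"
    by (simp add: le_floor_sqrtI)
  then show "\<exists>N. \<forall>n\<ge>N. z \<le> floor_sqrt n"
    by blast
qed

lemma LIMSEQ_scaled_of_squares:
  fixes s :: "nat \<Rightarrow> 'b::real_normed_vector"
  assumes incr: "\<And>n. norm (s (Suc n) - s n) \<le> 1"
    and squares: "(\<lambda>m. (1 / real (m\<^sup>2)) *\<^sub>R s (m\<^sup>2)) \<longlonglongrightarrow> 0"
  shows "(\<lambda>n. (1 / real n) *\<^sub>R s n) \<longlonglongrightarrow> 0"
proof (rule Lim_null_comparison)
  define a where "a m = norm (s (m\<^sup>2)) / real (m\<^sup>2) + 2 / real m" for m
  have "a \<longlonglongrightarrow> 0"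
    using tendsto_norm[OF squares] unfolding a_def
    by (auto intro!: tendsto_add_zero lim_const_over_n)
  then show "(\<lambda>n. a (floor_sqrt n)) \<longlonglongrightarrow> 0"
    by (rule filterlim_compose[OF _ filterlim_floor_sqrt_at_top])
  show "\<forall>\<^sub>F n in sequentially. norm ((1 / real n) *\<^sub>R s n) \<le> a (floor_sqrt n)"
  proof (rule eventually_sequentiallyI[of 1])
    fix n :: nat assume "1 \<le> n"
    define m where "m = floor_sqrt n"
    have m: "m\<^sup>2 \<le> n" "n < (Suc m)\<^sup>2" "1 \<le> m"
      using Suc_floor_sqrt_power2_gt[of n] \<open>1 \<le> n\<close> le_floor_sqrtI[of 1 n] by (simp_all add: m_def)
    have "norm (s n) \<le> norm (s (m\<^sup>2)) + real (n - m\<^sup>2)"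
      using norm_diff_le_of_unit_increments[where s = s, OF incr, of "m\<^sup>2" "n - m\<^sup>2"] m(1)
        norm_triangle_sub[of "s n" "s (m\<^sup>2)"]
      by simp
    also have "real (n - m\<^sup>2) \<le> 2 * real m"
      using m(2) by (simp add: power2_eq_square of_nat_diff[OF m(1)])
    finally have "norm (s n) / real n \<le> norm (s (m\<^sup>2)) / real n + 2 * real m / real n"
      by (simp add: add_divide_distrib[symmetric] divide_right_mono)
    also have "\<dots> \<le> a m"
    proof -
      have mn: "real m * real m \<le> real n"
        using m(1) by (metis of_nat_le_iff of_nat_mult power2_eq_square)
      have pos: "0 < real m * real m"
        using m(3) by simp
      have "2 * real m / real n \<le> 2 * real m / (real m * real m)"
        using mn pos by (intro divide_left_mono) auto
      moreover have "norm (s (m\<^sup>2)) / real n \<le> norm (s (m\<^sup>2)) / real (m\<^sup>2)"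
        using mn pos by (intro divide_left_mono) (auto simp: power2_eq_square)
      ultimately show ?thesis
        unfolding a_def using m(3) by simp
    qed
    finally show "norm ((1 / real n) *\<^sub>R s n) \<le> a (floor_sqrt n)"
      by (simp add: m_def)
  qed
qed

lemma Cesaro_mean_abs_LIMSEQ_zero:
  fixes b :: "nat \<Rightarrow> real"
  assumes "b \<longlonglongrightarrow> 0"
  shows "(\<lambda>n. (\<Sum>k=1..n. \<bar>b k\<bar>) / real n) \<longlonglongrightarrow> 0"
proof (rule LIMSEQ_I)
  fix r :: real assume "0 < r"
  then obtain N where N: "\<And>k. k \<ge> N \<Longrightarrow> \<bar>b k\<bar> < r / 2"
    using LIMSEQ_D[OF assms, of "r / 2"] by auto
  define C where "C = (\<Sum>k<N. \<bar>b k\<bar>)"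
  obtain n0 :: nat where n0: "C / (r / 2) < real n0"
    using reals_Archimedean2 by blast
  have "\<bar>(\<Sum>k=1..n. \<bar>b k\<bar>) / real n\<bar> < r" if "n \<ge> Suc n0" for n
  proof -
    have "C < r / 2 * real n0"
      using n0 \<open>0 < r\<close> by (simp add: field_simps)
    also have "\<dots> \<le> r / 2 * real n"
      using that \<open>0 < r\<close> by (intro mult_left_mono) auto
    finally have n: "real n > 0" "C < r / 2 * real n"
      using that by auto
    have "(\<Sum>k=1..n. \<bar>b k\<bar>) \<le> (\<Sum>k=1..n. r / 2 + (if k < N then \<bar>b k\<bar> else 0))"
      using N \<open>0 < r\<close> by (intro sum_mono) (auto simp: less_imp_le not_less)
    also have "\<dots> = r / 2 * real n + (\<Sum>k\<in>{1..n} \<inter> {..<N}. \<bar>b k\<bar>)"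
      by (simp add: sum.distrib sum.inter_restrict)
    also have "\<dots> \<le> r / 2 * real n + C"
      unfolding C_def by (intro add_left_mono sum_mono2) auto
    finally have "(\<Sum>k=1..n. \<bar>b k\<bar>) < r * real n"
      using n by linarith
    then show ?thesis
      using n by (simp add: sum_nonneg field_simps)
  qed
  then show "\<exists>n0. \<forall>n\<ge>n0. norm ((\<Sum>k=1..n. \<bar>b k\<bar>) / real n - 0) < r"
    by auto
qed

lemma LIMSEQ_scaled_mean_of_scaled:
  fixes s :: "nat \<Rightarrow> 'b::real_normed_vector"
  assumes "(\<lambda>n. (1 / real n) *\<^sub>R s n) \<longlonglongrightarrow> 0"
  shows "(\<lambda>n. (1 / real n) *\<^sub>R ((1 / real n) *\<^sub>R (\<Sum>k=1..n. s k))) \<longlonglongrightarrow> 0"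
proof (rule Lim_null_comparison)
  define b where "b k = norm (s k) / real k" for k
  have "b \<longlonglongrightarrow> 0"
    using tendsto_norm[OF assms] unfolding b_def by simp
  then show "(\<lambda>n. (\<Sum>k=1..n. \<bar>b k\<bar>) / real n) \<longlonglongrightarrow> 0"
    by (rule Cesaro_mean_abs_LIMSEQ_zero)
  show "\<forall>\<^sub>F n in sequentially.
      norm ((1 / real n) *\<^sub>R ((1 / real n) *\<^sub>R (\<Sum>k=1..n. s k))) \<le> (\<Sum>k=1..n. \<bar>b k\<bar>) / real n"
  proof (rule eventually_sequentiallyI[of 1])
    fix n :: nat assume n: "1 \<le> n"
    have "norm (\<Sum>k=1..n. s k) \<le> (\<Sum>k=1..n. norm (s k))"
      by (rule norm_sum)
    also have "\<dots> \<le> (\<Sum>k=1..n. real n * \<bar>b k\<bar>)"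
    proof (intro sum_mono)
      fix k assume "k \<in> {1..n}"
      then have "norm (s k) = real k * \<bar>b k\<bar>" "real k \<le> real n"
        by (auto simp: b_def)
      then show "norm (s k) \<le> real n * \<bar>b k\<bar>"
        by (simp add: mult_right_mono)
    qed
    finally show "norm ((1 / real n) *\<^sub>R ((1 / real n) *\<^sub>R (\<Sum>k=1..n. s k)))
        \<le> (\<Sum>k=1..n. \<bar>b k\<bar>) / real n"
      using n by (simp add: sum_distrib_left[symmetric] field_simps)
  qed
qed

section \<open>The elephant random walk\<close>

lemma erw_dirs_eq_axis: "erw_dirs = (\<lambda>(i, s). axis i s) ` (UNIV \<times> {1, -1})"
  unfolding erw_dirs_def axis_def by auto

lemma finite_erw_dirs: "finite erw_dirs"
  unfolding erw_dirs_eq_axis by simp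

lemma card_erw_dirs: "card (erw_dirs :: (real ^ 'd) set) = 2 * CARD('d)"
proof -
  have "inj_on (\<lambda>(i, s). axis i s :: real ^ 'd) (UNIV \<times> {1, -1})"
    by (auto simp: inj_on_def axis_eq_axis)
  then show ?thesis
    unfolding erw_dirs_eq_axis by (simp add: card_image card_cartesian_product)
qed

lemma norm_erw_dirs: "v \<in> erw_dirs \<Longrightarrow> norm v = 1"
  unfolding erw_dirs_eq_axis by (auto simp: norm_eq_sqrt_inner inner_axis_axis)

lemma uminus_erw_dirs: "v \<in> erw_dirs \<Longrightarrow> - v \<in> erw_dirs"
  unfolding erw_dirs_eq_axis by (auto simp: image_iff axis_def vec_eq_iff)

lemma sum_erw_dirs: "(\<Sum>v\<in>erw_dirs. v) = (0 :: real ^ 'd)"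
proof -
  have "uminus ` erw_dirs = (erw_dirs :: (real ^ 'd) set)"
    using uminus_erw_dirs by (force simp: image_iff)
  then have "(\<Sum>v\<in>erw_dirs. v) = (\<Sum>v\<in>uminus ` erw_dirs. v :: real ^ 'd)"
    by simp
  also have "\<dots> = (\<Sum>v\<in>erw_dirs. - v)"
    by (simp add: sum.reindex inj_on_def)
  finally have "(\<Sum>v\<in>erw_dirs. v) = (\<Sum>v\<in>erw_dirs. - v :: real ^ 'd)" .
  then show ?thesis
    by (simp add: sum_negf vec_eq_iff)
qed

lemma sum_PiE_insert:
  assumes "a \<notin> S"
  shows "(\<Sum>f\<in>Pi\<^sub>E (insert a S) T. F f) = (\<Sum>g\<in>Pi\<^sub>E S T. \<Sum>y\<in>T a. F (g(a := y)))"
proof -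
  have "(\<Sum>f\<in>Pi\<^sub>E (insert a S) T. F f) = (\<Sum>(y, g)\<in>T a \<times> Pi\<^sub>E S T. F (g(a := y)))"
    unfolding PiE_insert_eq
    by (subst sum.reindex[OF inj_combinator[OF assms]]) (simp add: case_prod_beta)
  also have "\<dots> = (\<Sum>g\<in>Pi\<^sub>E S T. \<Sum>y\<in>T a. F (g(a := y)))"
    by (simp add: sum.cartesian_product[symmetric] sum.swap[of _ "T a"])
  finally show ?thesis .
qed

definition erw_switch_prob :: "real \<Rightarrow> nat \<Rightarrow> real" where
  "erw_switch_prob p d = (1 - p) / (2 * real d - 1)"

definition erw_drift :: "real \<Rightarrow> nat \<Rightarrow> real" where
  "erw_drift p d = p - erw_switch_prob p d"

lemma erw_drift_less_half:
  assumes "d \<ge> 1" and "p < (2 * real d + 1) / (4 * real d)"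
  shows "erw_drift p d < 1 / 2"
proof -
  have "2 * real d - 1 > 0" "real d > 0"
    using assms(1) by auto
  then show ?thesis
    using assms(2) by (simp add: erw_drift_def erw_switch_prob_def field_simps)
qed

locale erw =
  fixes M :: "'a measure" and p :: real and X :: "nat \<Rightarrow> 'a \<Rightarrow> real ^ 'd"
  assumes is_erw: "is_erw M p X"
begin

sublocale prob_space M
  using is_erw unfolding is_erw_def by blast

lemma measurable_X [measurable]: "X k \<in> measurable M (count_space UNIV)"
  using is_erw unfolding is_erw_def by blast

text \<open>Probability that the next step is \<open>v\<close> when the uniformly chosen earlier step was \<open>w\<close>.\<close>
definition recall_prob :: "real ^ 'd \<Rightarrow> real ^ 'd \<Rightarrow> real" where
  "recall_prob w v = (if w = v then p else erw_switch_prob p CARD('d))"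

lemma sum_recall_prob:
  assumes "w \<in> erw_dirs"
  shows "(\<Sum>v\<in>erw_dirs. recall_prob w v) = 1"
proof -
  have "(\<Sum>v\<in>erw_dirs - {w}. recall_prob w v)
      = (\<Sum>v\<in>erw_dirs - {w}. erw_switch_prob p CARD('d))"
    by (rule sum.cong) (auto simp: recall_prob_def)
  then have "(\<Sum>v\<in>erw_dirs. recall_prob w v) = p + (\<Sum>v\<in>erw_dirs - {w}. erw_switch_prob p CARD('d))"
    by (simp add: sum.remove[OF finite_erw_dirs assms] recall_prob_def)
  also have "\<dots> = p + (2 * real CARD('d) - 1) * erw_switch_prob p CARD('d)"
    using assms by (simp add: card_erw_dirs of_nat_diff)
  also have "\<dots> = 1"
  proof -
    have "real CARD('d) \<ge> 1"
      by simp
    then have "2 * real CARD('d) - 1 \<noteq> 0"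
      by linarith
    then show ?thesis
      by (simp add: erw_switch_prob_def)
  qed
  finally show ?thesis .
qed

lemma sum_recall_prob_scaleR:
  assumes "w \<in> erw_dirs"
  shows "(\<Sum>v\<in>erw_dirs. recall_prob w v *\<^sub>R v) = erw_drift p CARD('d) *\<^sub>R w"
proof -
  have "(\<Sum>v\<in>erw_dirs - {w}. recall_prob w v *\<^sub>R v)
      = (\<Sum>v\<in>erw_dirs - {w}. erw_switch_prob p CARD('d) *\<^sub>R v)"
    by (rule sum.cong) (auto simp: recall_prob_def)
  then have "(\<Sum>v\<in>erw_dirs. recall_prob w v *\<^sub>R v)
      = p *\<^sub>R w + (\<Sum>v\<in>erw_dirs - {w}. erw_switch_prob p CARD('d) *\<^sub>R v)"
    by (simp add: sum.remove[OF finite_erw_dirs assms] recall_prob_def)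
  also have "\<dots> = p *\<^sub>R w - erw_switch_prob p CARD('d) *\<^sub>R w"
  proof -
    have "(\<Sum>v\<in>erw_dirs - {w}. v) = - w"
      using sum_diff1[OF finite_erw_dirs, of "\<lambda>v. v" w] assms by (simp add: sum_erw_dirs)
    then show ?thesis
      by (simp add: scaleR_sum_right[symmetric])
  qed
  finally show ?thesis
    by (simp add: erw_drift_def scaleR_diff_left)
qed

definition histories :: "nat \<Rightarrow> (nat \<Rightarrow> real ^ 'd) set" where
  "histories n = Pi\<^sub>E {1..n} (\<lambda>_. erw_dirs)"

definition history :: "nat \<Rightarrow> 'a \<Rightarrow> nat \<Rightarrow> real ^ 'd" where
  "history n \<omega> = restrict (\<lambda>k. X k \<omega>) {1..n}"

definition history_prob :: "nat \<Rightarrow> (nat \<Rightarrow> real ^ 'd) \<Rightarrow> real" where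
  "history_prob n h = prob {\<omega>\<in>space M. \<forall>k\<in>{1..n}. X k \<omega> = h k}"

definition step_prob :: "nat \<Rightarrow> (nat \<Rightarrow> real ^ 'd) \<Rightarrow> real ^ 'd \<Rightarrow> real" where
  "step_prob n h v = (\<Sum>k=1..n. recall_prob (h k) v) / real n"

definition history_expectation :: "nat \<Rightarrow> ((nat \<Rightarrow> real ^ 'd) \<Rightarrow> real) \<Rightarrow> real" where
  "history_expectation n F = (\<Sum>h\<in>histories n. F h * history_prob n h)"

lemma history_prob_nonneg: "history_prob n h \<ge> 0"
  by (simp add: history_prob_def)

lemma finite_histories: "finite (histories n)"
  unfolding histories_def by (simp add: finite_PiE finite_erw_dirs)

lemma histories_Suc: "histories (Suc n) = Pi\<^sub>E (insert (Suc n) {1..n}) (\<lambda>_. erw_dirs)"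
  unfolding histories_def by (simp add: atLeastAtMostSuc_conv insert_commute)

lemma history_prob_one:
  assumes "h 1 \<in> erw_dirs"
  shows "history_prob 1 h = 1 / (2 * real CARD('d))"
proof -
  have "{\<omega>\<in>space M. \<forall>k\<in>{1..1}. X k \<omega> = h k} = {\<omega>\<in>space M. X 1 \<omega> = h 1}"
    by auto
  moreover have "prob {\<omega>\<in>space M. X 1 \<omega> = h 1} = 1 / (2 * real CARD('d))"
    using is_erw assms unfolding is_erw_def by blast
  ultimately show ?thesis
    unfolding history_prob_def by simp
qed

lemma history_prob_Suc:
  assumes "n \<ge> 1" and "v \<in> erw_dirs"
  shows "history_prob (Suc n) (h(Suc n := v)) = history_prob n h * step_prob n h v"
proof -
  let ?h = "h(Suc n := v)"
  have "history_prob (Suc n) ?h = prob {\<omega>\<in>space M. (\<forall>k\<in>{1..n}. X k \<omega> = ?h k) \<and> X (Suc n) \<omega> = v}"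
    unfolding history_prob_def using assms(1)
    by (intro arg_cong[where f = prob]) (auto simp: le_Suc_eq)
  also have "\<dots> = prob {\<omega>\<in>space M. \<forall>k\<in>{1..n}. X k \<omega> = ?h k}
      * ((\<Sum>k=1..n. if ?h k = v then p else (1 - p) / (2 * real CARD('d) - 1)) / real n)"
    using is_erw assms unfolding is_erw_def by blast
  also have "{\<omega>\<in>space M. \<forall>k\<in>{1..n}. X k \<omega> = ?h k} = {\<omega>\<in>space M. \<forall>k\<in>{1..n}. X k \<omega> = h k}"
    by auto
  also have "(\<Sum>k=1..n. if ?h k = v then p else (1 - p) / (2 * real CARD('d) - 1))
      = (\<Sum>k=1..n. recall_prob (h k) v)"
    by (rule sum.cong) (auto simp: recall_prob_def erw_switch_prob_def)
  finally show ?thesis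
    unfolding history_prob_def step_prob_def .
qed

lemma sum_step_prob:
  assumes "n \<ge> 1" and "h \<in> histories n"
  shows "(\<Sum>v\<in>erw_dirs. step_prob n h v) = 1"
proof -
  have "(\<Sum>v\<in>erw_dirs. step_prob n h v) = (\<Sum>k=1..n. \<Sum>v\<in>erw_dirs. recall_prob (h k) v) / real n"
    unfolding step_prob_def by (simp add: sum_divide_distrib[symmetric] sum.swap[of _ erw_dirs])
  also have "\<dots> = 1"
    using assms sum_recall_prob by (simp add: histories_def PiE_iff)
  finally show ?thesis .
qed

lemma sum_step_prob_scaleR:
  assumes "n \<ge> 1" and "h \<in> histories n"
  shows "(\<Sum>v\<in>erw_dirs. step_prob n h v *\<^sub>R v) = (erw_drift p CARD('d) / real n) *\<^sub>R (\<Sum>k=1..n. h k)"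
proof -
  have "(\<Sum>v\<in>erw_dirs. step_prob n h v *\<^sub>R v)
      = (1 / real n) *\<^sub>R (\<Sum>k=1..n. \<Sum>v\<in>erw_dirs. recall_prob (h k) v *\<^sub>R v)"
  proof -
    have "step_prob n h v *\<^sub>R v = (1 / real n) *\<^sub>R (\<Sum>k=1..n. recall_prob (h k) v *\<^sub>R v)" for v
      unfolding step_prob_def scaleR_sum_left[symmetric] by simp
    then show ?thesis
      by (simp add: scaleR_sum_right[symmetric] sum.swap[of _ erw_dirs])
  qed
  also have "\<dots> = (erw_drift p CARD('d) / real n) *\<^sub>R (\<Sum>k=1..n. h k)"
    using assms sum_recall_prob_scaleR by (simp add: histories_def PiE_iff scaleR_sum_right)
  finally show ?thesis .
qed

lemma history_expectation_Suc:
  assumes "n \<ge> 1"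
  shows "history_expectation (Suc n) F
    = history_expectation n (\<lambda>h. \<Sum>v\<in>erw_dirs. F (h(Suc n := v)) * step_prob n h v)"
proof -
  have "history_expectation (Suc n) F
      = (\<Sum>h\<in>histories n. \<Sum>v\<in>erw_dirs. F (h(Suc n := v)) * history_prob (Suc n) (h(Suc n := v)))"
    unfolding history_expectation_def histories_Suc by (simp add: sum_PiE_insert histories_def)
  also have "\<dots> = history_expectation n (\<lambda>h. \<Sum>v\<in>erw_dirs. F (h(Suc n := v)) * step_prob n h v)"
    unfolding history_expectation_def
    by (rule sum.cong[OF refl]) (simp add: history_prob_Suc[OF assms] sum_distrib_left mult_ac)
  finally show ?thesis .
qed

lemma sum_history_prob: "n \<ge> 1 \<Longrightarrow> (\<Sum>h\<in>histories n. history_prob n h) = 1"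
proof (induction n rule: nat_induct_at_least)
  case base
  have "(\<Sum>h\<in>histories 1. history_prob 1 h) = (\<Sum>h\<in>histories 1. 1 / (2 * real CARD('d)))"
    using history_prob_one by (intro sum.cong) (auto simp: histories_def PiE_iff)
  also have "\<dots> = 1"
    by (simp add: histories_def card_PiE card_erw_dirs)
  finally show ?case
    by simp
next
  case (Suc n)
  have "(\<Sum>h\<in>histories (Suc n). history_prob (Suc n) h) = history_expectation (Suc n) (\<lambda>_. 1)"
    by (simp add: history_expectation_def)
  also have "\<dots> = history_expectation n (\<lambda>h. \<Sum>v\<in>erw_dirs. 1 * step_prob n h v)"
    by (rule history_expectation_Suc[OF Suc(1)])
  also have "\<dots> = history_expectation n (\<lambda>_. 1)"
    unfolding history_expectation_def using Suc(1) by (intro sum.cong) (simp_all add: sum_step_prob)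
  finally show ?case
    using Suc(2) by (simp add: history_expectation_def)
qed

definition second_moment :: "nat \<Rightarrow> real" where
  "second_moment n = history_expectation n (\<lambda>h. (norm (\<Sum>k=1..n. h k))\<^sup>2)"

lemma second_moment_nonneg: "second_moment n \<ge> 0"
  unfolding second_moment_def history_expectation_def
  by (intro sum_nonneg mult_nonneg_nonneg) (auto simp: history_prob_nonneg)

lemma second_moment_one: "second_moment 1 = 1"
proof -
  have "second_moment 1 = (\<Sum>h\<in>histories 1. history_prob 1 h)"
    unfolding second_moment_def history_expectation_def
    by (rule sum.cong) (auto simp: histories_def PiE_iff norm_erw_dirs)
  then show ?thesis
    by (simp add: sum_history_prob)
qed

lemma second_moment_Suc:
  assumes n: "n \<ge> 1"
  shows "second_moment (Suc n) = (1 + 2 * erw_drift p CARD('d) / real n) * second_moment n + 1"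
proof -
  have step: "(\<Sum>v\<in>erw_dirs. (norm (\<Sum>k=1..Suc n. (h(Suc n := v)) k))\<^sup>2 * step_prob n h v)
      = (1 + 2 * erw_drift p CARD('d) / real n) * (norm (\<Sum>k=1..n. h k))\<^sup>2 + 1"
    if h: "h \<in> histories n" for h
  proof -
    define s where "s = (\<Sum>k=1..n. h k)"
    have "(\<Sum>k=1..Suc n. (h(Suc n := v)) k) = s + v" for v
    proof -
      have "(\<Sum>k=1..n. (h(Suc n := v)) k) = s"
        unfolding s_def by (rule sum.cong) auto
      then show ?thesis
        by simp
    qed
    moreover have "(norm (s + v))\<^sup>2 = (norm s)\<^sup>2 + 2 * inner s v + 1" if "v \<in> erw_dirs" for v
      using norm_erw_dirs[OF that, unfolded norm_eq_1]
      by (simp add: power2_norm_eq_inner inner_add inner_commute)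
    ultimately have "(\<Sum>v\<in>erw_dirs. (norm (\<Sum>k=1..Suc n. (h(Suc n := v)) k))\<^sup>2 * step_prob n h v)
        = (\<Sum>v\<in>erw_dirs. (norm s)\<^sup>2 * step_prob n h v + 2 * inner s (step_prob n h v *\<^sub>R v)
            + step_prob n h v)"
      by (intro sum.cong) (simp_all add: algebra_simps)
    also have "\<dots> = (norm s)\<^sup>2 * (\<Sum>v\<in>erw_dirs. step_prob n h v)
        + 2 * inner s (\<Sum>v\<in>erw_dirs. step_prob n h v *\<^sub>R v) + (\<Sum>v\<in>erw_dirs. step_prob n h v)"
      by (simp add: sum.distrib sum_distrib_left inner_sum_right)
    also have "\<dots> = (1 + 2 * erw_drift p CARD('d) / real n) * (norm s)\<^sup>2 + 1"
    proof -
      have "(\<Sum>v\<in>erw_dirs. step_prob n h v *\<^sub>R v) = (erw_drift p CARD('d) / real n) *\<^sub>R s"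
        unfolding s_def by (rule sum_step_prob_scaleR[OF n h])
      then show ?thesis
        using sum_step_prob[OF n h] by (simp add: power2_norm_eq_inner algebra_simps)
    qed
    finally show ?thesis
      by (simp add: s_def)
  qed
  have "second_moment (Suc n)
      = history_expectation n
          (\<lambda>h. (1 + 2 * erw_drift p CARD('d) / real n) * (norm (\<Sum>k=1..n. h k))\<^sup>2 + 1)"
    unfolding second_moment_def history_expectation_Suc[OF n]
    unfolding history_expectation_def by (intro sum.cong refl) (simp only: step)
  also have "\<dots> = (1 + 2 * erw_drift p CARD('d) / real n) * second_moment n + 1"
    unfolding second_moment_def history_expectation_def
    by (simp add: distrib_right sum.distrib sum_distrib_left mult.assoc sum_history_prob[OF n])
  finally show ?thesis .
qed

lemma second_moment_le_linear:
  assumes "erw_drift p CARD('d) < 1 / 2" and "n \<ge> 1"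
  shows "second_moment n \<le> max 1 (1 / (1 - 2 * erw_drift p CARD('d))) * real n"
  using assms(2)
proof (induction n rule: nat_induct_at_least)
  case base
  show ?case
    using second_moment_one by simp
next
  case (Suc n)
  define K where "K = max 1 (1 / (1 - 2 * erw_drift p CARD('d)))"
  have "K * (1 - 2 * erw_drift p CARD('d)) \<ge> 1"
    using assms(1) by (simp add: K_def field_simps max_def)
  show ?case
  proof (cases "1 + 2 * erw_drift p CARD('d) / real n \<ge> 0")
    case True
    have "second_moment (Suc n) \<le> (1 + 2 * erw_drift p CARD('d) / real n) * (K * real n) + 1"
      unfolding second_moment_Suc[OF Suc(1)] K_def
      using True Suc(2) by (intro add_mono mult_left_mono) auto
    also have "\<dots> = K * real n + 2 * erw_drift p CARD('d) * K + 1"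
      using Suc(1) by (simp add: field_simps)
    also have "\<dots> \<le> K * real (Suc n)"
      using \<open>K * (1 - 2 * erw_drift p CARD('d)) \<ge> 1\<close> by (simp add: algebra_simps)
    finally show ?thesis
      by (simp add: K_def)
  next
    case False
    then have "second_moment (Suc n) \<le> 1"
      unfolding second_moment_Suc[OF Suc(1)]
      using second_moment_nonneg[of n] by (simp add: mult_nonpos_nonneg)
    also have "1 \<le> K * real (Suc n)"
    proof -
      have "1 \<le> K"
        by (simp add: K_def)
      then show ?thesis
        using mult_mono[OF \<open>1 \<le> K\<close>, of 1 "real (Suc n)"] by simp
    qed
    finally show ?thesis
      by (simp add: K_def)
  qed
qed

lemma erw_pos_eq_sum_history: "erw_pos X n \<omega> = (\<Sum>k=1..n. history n \<omega> k)"
  unfolding erw_pos_def history_def by simp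

lemma history_in_eq_UN:
  assumes "A \<subseteq> histories n"
  shows "{\<omega>\<in>space M. history n \<omega> \<in> A} = (\<Union>h\<in>A. {\<omega>\<in>space M. \<forall>k\<in>{1..n}. X k \<omega> = h k})"
proof safe
  fix \<omega> assume "\<omega> \<in> space M" "history n \<omega> \<in> A"
  then show "\<omega> \<in> (\<Union>h\<in>A. {\<omega>\<in>space M. \<forall>k\<in>{1..n}. X k \<omega> = h k})"
    by (auto simp: history_def intro!: bexI[of _ "history n \<omega>"])
next
  fix \<omega> h assume h: "h \<in> A" and "\<forall>k\<in>{1..n}. X k \<omega> = h k"
  moreover have "h \<in> extensional {1..n}"
    using h assms by (auto simp: histories_def PiE_def)
  ultimately have "history n \<omega> = h"
    by (auto simp: history_def extensional_def)
  then show "history n \<omega> \<in> A"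
    using h by simp
qed

lemma history_in_sets:
  assumes "A \<subseteq> histories n"
  shows "{\<omega>\<in>space M. history n \<omega> \<in> A} \<in> sets M"
  unfolding history_in_eq_UN[OF assms]
  using finite_subset[OF assms finite_histories] by (intro sets.finite_UN) auto

lemma prob_history_in:
  assumes "A \<subseteq> histories n"
  shows "prob {\<omega>\<in>space M. history n \<omega> \<in> A} = (\<Sum>h\<in>A. history_prob n h)"
proof -
  have "disjoint_family_on (\<lambda>h. {\<omega>\<in>space M. \<forall>k\<in>{1..n}. X k \<omega> = h k}) A"
    unfolding disjoint_family_on_def
  proof (intro ballI impI)
    fix h h' assume "h \<in> A" "h' \<in> A" "h \<noteq> h'"
    then obtain k where "h k \<noteq> h' k"
      by (meson ext)
    moreover have "h \<in> extensional {1..n}" "h' \<in> extensional {1..n}"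
      using \<open>h \<in> A\<close> \<open>h' \<in> A\<close> assms by (auto simp: histories_def PiE_def)
    ultimately have "k \<in> {1..n}"
      by (metis extensional_arb)
    with \<open>h k \<noteq> h' k\<close>
    show "{\<omega>\<in>space M. \<forall>k\<in>{1..n}. X k \<omega> = h k}
        \<inter> {\<omega>\<in>space M. \<forall>k\<in>{1..n}. X k \<omega> = h' k} = {}"
      by auto
  qed
  then show ?thesis
    unfolding history_in_eq_UN[OF assms] history_prob_def
    using finite_subset[OF assms finite_histories] by (intro measure_finite_Union) auto
qed

lemma AE_X_in_erw_dirs: "AE \<omega> in M. \<forall>k\<ge>1. X k \<omega> \<in> erw_dirs"
proof -
  have "AE \<omega> in M. history n \<omega> \<in> histories n" for n
  proof (cases "n \<ge> 1")
    case True
    then have "prob {\<omega>\<in>space M. history n \<omega> \<in> histories n} = 1"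
      by (simp add: prob_history_in sum_history_prob)
    then show ?thesis
      by (rule AE_prob_1[THEN AE_mp]) simp
  next
    case False
    then show ?thesis
      by (simp add: history_def histories_def restrict_def)
  qed
  then have "AE \<omega> in M. \<forall>n. history n \<omega> \<in> histories n"
    by (simp add: AE_all_countable)
  then show ?thesis
  proof eventually_elim
    case (elim \<omega>)
    show ?case
    proof (intro allI impI)
      fix k :: nat assume "k \<ge> 1"
      then show "X k \<omega> \<in> erw_dirs"
        using elim[rule_format, of k] by (auto simp: history_def histories_def PiE_iff)
    qed
  qed
qed

lemma prob_norm_erw_pos_ge_le:
  assumes "e > 0" and "n \<ge> 1"
  shows "prob {\<omega>\<in>space M. history n \<omega> \<in> {h\<in>histories n. e * real n \<le> norm (\<Sum>k=1..n. h k)}}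
    \<le> second_moment n / (e * real n)\<^sup>2"
proof -
  let ?A = "{h\<in>histories n. e * real n \<le> norm (\<Sum>k=1..n. h k)}"
  have "prob {\<omega>\<in>space M. history n \<omega> \<in> ?A} = (\<Sum>h\<in>?A. history_prob n h)"
    by (rule prob_history_in) auto
  also have "\<dots> \<le> (\<Sum>h\<in>?A. (norm (\<Sum>k=1..n. h k))\<^sup>2 / (e * real n)\<^sup>2 * history_prob n h)"
  proof (rule sum_mono)
    fix h assume "h \<in> ?A"
    then have "(e * real n)\<^sup>2 \<le> (norm (\<Sum>k=1..n. h k))\<^sup>2"
      using assms by (intro power_mono) auto
    then have "1 \<le> (norm (\<Sum>k=1..n. h k))\<^sup>2 / (e * real n)\<^sup>2"
      using assms by simp
    from mult_right_mono[OF this history_prob_nonneg]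
    show "history_prob n h \<le> (norm (\<Sum>k=1..n. h k))\<^sup>2 / (e * real n)\<^sup>2 * history_prob n h"
      by simp
  qed
  also have "\<dots> \<le> (\<Sum>h\<in>histories n. (norm (\<Sum>k=1..n. h k))\<^sup>2 / (e * real n)\<^sup>2 * history_prob n h)"
    by (rule sum_mono2) (auto simp: finite_histories history_prob_nonneg)
  also have "\<dots> = second_moment n / (e * real n)\<^sup>2"
    by (simp add: second_moment_def history_expectation_def sum_divide_distrib)
  finally show ?thesis .
qed

lemma AE_eventually_norm_erw_pos_squares_less:
  assumes "erw_drift p CARD('d) < 1 / 2" and "e > 0"
  shows "AE \<omega> in M. eventually (\<lambda>m. norm (erw_pos X (m\<^sup>2) \<omega>) < e * real (m\<^sup>2)) sequentially"
proof -
  define K where "K = max 1 (1 / (1 - 2 * erw_drift p CARD('d)))"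
  define A where "A m = {\<omega>\<in>space M. history (m\<^sup>2) \<omega> \<in>
    {h\<in>histories (m\<^sup>2). e * real (m\<^sup>2) \<le> norm (\<Sum>k=1..m\<^sup>2. h k)}}" for m
  have A_sets: "A m \<in> sets M" for m
    unfolding A_def by (rule history_in_sets) auto
  have bound: "prob (A m) \<le> K / e\<^sup>2 * inverse (real m ^ 2)" if "m \<ge> 1" for m
  proof -
    have "prob (A m) \<le> second_moment (m\<^sup>2) / (e * real (m\<^sup>2))\<^sup>2"
      unfolding A_def using assms(2) that by (intro prob_norm_erw_pos_ge_le) auto
    also have "\<dots> \<le> K * real (m\<^sup>2) / (e * real (m\<^sup>2))\<^sup>2"
      unfolding K_def using that
      by (intro divide_right_mono second_moment_le_linear[OF assms(1)]) auto
    also have "\<dots> = K / e\<^sup>2 * inverse (real (m\<^sup>2))"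
    proof -
      have "K * x / (e * x)\<^sup>2 = K / e\<^sup>2 * inverse x" if "x > 0" for x :: real
      proof -
        have "K * x / (e * x)\<^sup>2 = (x * K) / (x * (e\<^sup>2 * x))"
          by (simp add: power2_eq_square mult_ac)
        also have "\<dots> = K / (e\<^sup>2 * x)"
          using that by (intro nonzero_mult_divide_mult_cancel_left) simp
        finally show ?thesis
          by (simp add: divide_inverse)
      qed
      then show ?thesis
        using \<open>m \<ge> 1\<close> by simp
    qed
    also have "real (m\<^sup>2) = real m ^ 2"
      by simp
    finally show ?thesis .
  qed
  have "summable (\<lambda>m. K / e\<^sup>2 * inverse (real m ^ 2))"
    by (intro summable_mult inverse_power_summable) auto
  then have "summable (\<lambda>m. prob (A m))"
    by (rule summable_comparison_test'[where N = 1]) (use bound in auto)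
  then have "AE \<omega> in M. eventually (\<lambda>m. \<omega> \<in> space M - A m) sequentially"
    using A_sets by (intro borel_cantelli_AE1) (auto simp: emeasure_eq_measure)
  then show ?thesis
    using AE_X_in_erw_dirs
  proof eventually_elim
    case (elim \<omega>)
    from elim(1) show ?case
    proof (rule eventually_mono)
      fix m assume "\<omega> \<in> space M - A m"
      moreover have "history (m\<^sup>2) \<omega> \<in> histories (m\<^sup>2)"
        using elim(2) by (simp add: history_def histories_def)
      ultimately have "\<not> e * real (m\<^sup>2) \<le> norm (\<Sum>k=1..m\<^sup>2. history (m\<^sup>2) \<omega> k)"
        unfolding A_def by blast
      then show "norm (erw_pos X (m\<^sup>2) \<omega>) < e * real (m\<^sup>2)"
        by (simp add: erw_pos_eq_sum_history)
    qed
  qed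
qed

lemma AE_erw_pos_squares_LIMSEQ:
  assumes "erw_drift p CARD('d) < 1 / 2"
  shows "AE \<omega> in M. (\<lambda>m. (1 / real (m\<^sup>2)) *\<^sub>R erw_pos X (m\<^sup>2) \<omega>) \<longlonglongrightarrow> 0"
proof -
  have "AE \<omega> in M. \<forall>j. eventually
      (\<lambda>m. norm (erw_pos X (m\<^sup>2) \<omega>) < inverse (real (Suc j)) * real (m\<^sup>2)) sequentially"
    unfolding AE_all_countable
    by (intro allI AE_eventually_norm_erw_pos_squares_less[OF assms]) simp
  then show ?thesis
  proof eventually_elim
    case (elim \<omega>)
    show ?case
    proof (rule tendstoI)
      fix r :: real assume "r > 0"
      then obtain j where j: "inverse (real (Suc j)) < r"
        using reals_Archimedean by blast
      from elim[rule_format, of j]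
      show "eventually (\<lambda>m. dist ((1 / real (m\<^sup>2)) *\<^sub>R erw_pos X (m\<^sup>2) \<omega>) 0 < r) sequentially"
      proof (rule eventually_mono)
        fix m
        assume less: "norm (erw_pos X (m\<^sup>2) \<omega>) < inverse (real (Suc j)) * real (m\<^sup>2)"
        then have "real (m\<^sup>2) > 0"
          by (cases "m = 0") auto
        moreover have "inverse (real (Suc j)) * real (m\<^sup>2) < r * real (m\<^sup>2)"
          using j \<open>real (m\<^sup>2) > 0\<close> by (intro mult_strict_right_mono)
        with less have "norm (erw_pos X (m\<^sup>2) \<omega>) < r * real (m\<^sup>2)"
          by linarith
        ultimately show "dist ((1 / real (m\<^sup>2)) *\<^sub>R erw_pos X (m\<^sup>2) \<omega>) 0 < r"
          by (simp add: divide_less_eq)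
      qed
    qed
  qed
qed

end

theorem theorem2p1:
  fixes M :: "'a measure" and p :: real and X :: "nat \<Rightarrow> 'a \<Rightarrow> real ^ 'd"
  assumes "0 \<le> p" and "p \<le> 1"
    and "p < (2 * real CARD('d) + 1) / (4 * real CARD('d))"
    and "is_erw M p X"
  shows "AE \<omega> in M. (\<lambda>n. (1 / real n) *\<^sub>R erw_center X n \<omega>) \<longlonglongrightarrow> 0"
proof -
  interpret erw M p X
    by (rule erw.intro) fact
  have "erw_drift p CARD('d) < 1 / 2"
    using assms(3) by (intro erw_drift_less_half) simp_all
  from AE_X_in_erw_dirs AE_erw_pos_squares_LIMSEQ[OF this]
  show ?thesis
  proof eventually_elim
    case (elim \<omega>)
    have "norm (erw_pos X (Suc n) \<omega> - erw_pos X n \<omega>) \<le> 1" for n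
    proof -
      have "X (Suc n) \<omega> \<in> erw_dirs"
        using elim(1) by simp
      then show ?thesis
        by (simp add: erw_pos_def norm_erw_dirs)
    qed
    then have "(\<lambda>n. (1 / real n) *\<^sub>R erw_pos X n \<omega>) \<longlonglongrightarrow> 0"
      using elim(2) by (rule LIMSEQ_scaled_of_squares)
    then show ?case
      unfolding erw_center_def by (rule LIMSEQ_scaled_mean_of_scaled)
  qed
qed

end
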